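(* Let $\Sigma\in\mathcal{G}_n$ and let $Q_0$ be the unique regular rational orthogonal matrix with $Q_0^{\rm T}S(\Sigma)Q_0=S(\Sigma^{\rm T})$; suppose its level is $\ell_0=p_1p_2$ with $p_1,p_2$ distinct odd primes. Suppose $\Sigma$ is not WDGSS and that its generalized cospectral mates (up to isomorphism) are $\Sigma^{\rm T}$, $\Delta$ and $\Delta^{\rm T}$. Let $Q_1\in\mathcal{Q}(\Sigma)$ of level $p_1$ satisfy $Q_1^{\rm T}S(\Sigma)Q_1=S(\Delta)$, and let $Q_2$ be a regular rational orthogonal matrix of level $p_2$ satisfying $Q_2^{\rm T}S(\Delta)Q_2=S(\Sigma^{\rm T})$. If $\hat Q_0$ is a regular rational orthogonal matrix with $\hat Q_0^{\rm T}S(\Delta^{\rm T})\hat Q_0=S(\Delta)$, then $\hat Q_0=Q_2Q_1$ and the level of $\hat Q_0$ is $p_1p_2$.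
   Context: An oriented graph on vertices $v_1,\dots,v_n$ is a simple graph with each edge directed; its skew-adjacency matrix $S=(s_{ij})$ has $s_{ij}=1$ if $(v_i,v_j)$ is an arc, $-1$ if $(v_j,v_i)$ is an arc, $0$ otherwise. The converse $\Delta^{\rm T}$ of $\Delta$ reverses every arc, so $S(\Delta^{\rm T})=-S(\Delta)$. Two oriented graphs are isomorphic if their skew-adjacency matrices are conjugate by a permutation matrix; they are generalized cospectral if their skew-adjacency matrices $S$ have the same spectrum and the matrices $J-I-S$ have the same spectrum. A generalized cospectral mate of $\Sigma$ is an oriented graph generalized cospectral with but not isomorphic to $\Sigma$. $\Sigma$ is WDGSS if every oriented graph generalized cospectral with $\Sigma$ is isomorphic to $\Sigma$ or $\Sigma^{\rm T}$. With $e$ the all-one vector, $W(\Sigma)=[e,Se,\dots,S^{n-1}e]$, $S=S(\Sigma)$. $\mathcal{G}_n$ is the set of $n$-vertex oriented graphs with $2^{-\lfloor n/2\rfloor}\det W(\Sigma)$ an odd square-free integer. A rational orthogonal matrix $Q$ is regular if $Qe=e$; its level is the least positive integer $k$ with $kQ$ integral. $\mathcal{Q}(\Sigma)$ is the set of regular rational orthogonal $Q$ with $Q^{\rm T}S(\Sigma)Q=S(\Gamma)$ for some oriented graph $\Gamma$ generalized cospectral with $\Sigma$. *)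

theory Defs
  imports "Jordan_Normal_Form.Char_Poly" "HOL-Computational_Algebra.Squarefree"
          "HOL-Combinatorics.Permutations"
begin

text \<open>An oriented graph on n vertices is identified with its skew-adjacency matrix.\<close>
definition oriented_graph :: "nat \<Rightarrow> int mat \<Rightarrow> bool" where
  "oriented_graph n S \<longleftrightarrow> S \<in> carrier_mat n n \<and> (\<forall>i<n. S $$ (i,i) = 0) \<and>
     (\<forall>i<n. \<forall>j<n. S $$ (i,j) \<in> {-1,0,1} \<and> S $$ (j,i) = - S $$ (i,j))"

definition perm_mat :: "nat \<Rightarrow> (nat \<Rightarrow> nat) \<Rightarrow> int mat" where
  "perm_mat n \<sigma> = mat n n (\<lambda>(i,j). if \<sigma> i = j then 1 else 0)"

definition iso_og :: "nat \<Rightarrow> int mat \<Rightarrow> int mat \<Rightarrow> bool" where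
  "iso_og n S T \<longleftrightarrow> (\<exists>\<sigma>. \<sigma> permutes {..<n} \<and>
      (perm_mat n \<sigma>)\<^sup>T * S * perm_mat n \<sigma> = T)"

definition all_one_mat :: "nat \<Rightarrow> int mat" where
  "all_one_mat n = mat n n (\<lambda>_. 1)"

definition gen_cospectral :: "nat \<Rightarrow> int mat \<Rightarrow> int mat \<Rightarrow> bool" where
  "gen_cospectral n S T \<longleftrightarrow> char_poly S = char_poly T \<and>
     char_poly (all_one_mat n - 1\<^sub>m n - S) = char_poly (all_one_mat n - 1\<^sub>m n - T)"

definition WDGSS :: "nat \<Rightarrow> int mat \<Rightarrow> bool" where
  "WDGSS n S \<longleftrightarrow> (\<forall>T. oriented_graph n T \<and> gen_cospectral n S T \<longrightarrow>
       iso_og n S T \<or> iso_og n (- S) T)"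

definition walk_mat :: "nat \<Rightarrow> int mat \<Rightarrow> int mat" where
  "walk_mat n S = mat n n (\<lambda>(i,j). ((S ^\<^sub>m j) *\<^sub>v vec n (\<lambda>_. 1)) $ i)"

definition in_G :: "nat \<Rightarrow> int mat \<Rightarrow> bool" where
  "in_G n S \<longleftrightarrow> oriented_graph n S \<and> 2 ^ (n div 2) dvd det (walk_mat n S) \<and>
     odd (det (walk_mat n S) div 2 ^ (n div 2)) \<and>
     squarefree (det (walk_mat n S) div 2 ^ (n div 2))"

definition ratm :: "int mat \<Rightarrow> rat mat" where
  "ratm S = map_mat rat_of_int S"

definition reg_rat_orth :: "nat \<Rightarrow> rat mat \<Rightarrow> bool" where
  "reg_rat_orth n Q \<longleftrightarrow> Q \<in> carrier_mat n n \<and> Q\<^sup>T * Q = 1\<^sub>m n \<and>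
     Q *\<^sub>v vec n (\<lambda>_. 1) = vec n (\<lambda>_. 1)"

definition level :: "nat \<Rightarrow> rat mat \<Rightarrow> nat" where
  "level n Q = (LEAST k::nat. 0 < k \<and> (\<forall>i<n. \<forall>j<n. of_nat k * Q $$ (i,j) \<in> \<int>))"

definition Qset :: "nat \<Rightarrow> int mat \<Rightarrow> rat mat set" where
  "Qset n S = {Q. reg_rat_orth n Q \<and> (\<exists>T. oriented_graph n T \<and> gen_cospectral n S T \<and>
                   Q\<^sup>T * ratm S * Q = ratm T)}"

end

theory Submission
  imports Defs
begin

text \<open>Conjugating by \<open>Q\<^sub>1\<close> transports the congruence \<open>\<Delta>\<^sup>T \<rightarrow> \<Delta>\<close> given by \<open>Q\<^sub>h\<close>
  to one \<open>\<Sigma> \<rightarrow> \<Sigma>\<^sup>T\<close>, and so does the composite \<open>\<Sigma> \<rightarrow> \<Delta> \<rightarrow> \<Sigma>\<^sup>T\<close> of \<open>Q\<^sub>1\<close> and \<open>Q\<^sub>2\<close>. By uniqueness of \<open>Q\<^sub>0\<close>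
  both equal \<open>Q\<^sub>0\<close>, i.e. \<open>Q\<^sub>1 Q\<^sub>h Q\<^sub>1\<^sup>T = Q\<^sub>0 = Q\<^sub>1 Q\<^sub>2\<close>, whence \<open>Q\<^sub>h = Q\<^sub>2 Q\<^sub>1\<close>. The levels of rational
  matrices are submultiplicative in the divisibility order, so the level \<open>d\<close> of \<open>Q\<^sub>h\<close> divides \<open>p\<^sub>1p\<^sub>2\<close>,
  while \<open>Q\<^sub>0 = Q\<^sub>1 Q\<^sub>h Q\<^sub>1\<^sup>T = Q\<^sub>2\<^sup>T Q\<^sub>h Q\<^sub>2\<close> gives \<open>p\<^sub>1p\<^sub>2 | p\<^sub>1\<^sup>2 d\<close> and \<open>p\<^sub>1p\<^sub>2 | p\<^sub>2\<^sup>2 d\<close>; hence \<open>d = p\<^sub>1p\<^sub>2\<close>.\<close>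

definition clears_denoms :: "nat \<Rightarrow> nat \<Rightarrow> rat mat \<Rightarrow> bool" where
  "clears_denoms n k Q \<longleftrightarrow> (\<forall>i<n. \<forall>j<n. of_nat k * Q $$ (i,j) \<in> \<int>)"

lemma level_eq_Least_clears_denoms: "level n Q = (LEAST k. 0 < k \<and> clears_denoms n k Q)"
  unfolding level_def clears_denoms_def ..

lemma denom_times_rat_in_Ints: "of_int (snd (quotient_of q)) * q \<in> \<int>"
proof -
  obtain a b where ab: "quotient_of q = (a, b)" by fastforce
  then have "q = of_int a / of_int b" "b > 0"
    using quotient_of_div quotient_of_denom_pos by blast+
  then show ?thesis using ab by simp
qed

lemma clears_denoms_exists: "\<exists>k>0. clears_denoms n k Q"
proof -
  define den where "den ij = nat (snd (quotient_of (Q $$ ij)))" for ij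
  define k where "k = (\<Prod>ij\<in>{..<n} \<times> {..<n}. den ij)"
  have den_pos: "den ij > 0" for ij
    unfolding den_def using quotient_of_denom_pos' by simp
  have "clears_denoms n k Q"
    unfolding clears_denoms_def
  proof (intro allI impI)
    fix i j assume "i < n" "j < n"
    then have "den (i,j) dvd k" unfolding k_def by (intro dvd_prodI) auto
    then obtain m where "k = den (i,j) * m" by blast
    then have "of_nat k * Q $$ (i,j) = of_nat m * (of_int (snd (quotient_of (Q $$ (i,j)))) * Q $$ (i,j))"
      using den_pos[of "(i,j)"] unfolding den_def by simp
    also have "\<dots> \<in> \<int>" by (intro Ints_mult Ints_of_nat denom_times_rat_in_Ints)
    finally show "of_nat k * Q $$ (i,j) \<in> \<int>" .
  qed
  moreover have "k > 0" unfolding k_def using den_pos by (simp add: prod_pos)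
  ultimately show ?thesis by blast
qed

lemma level_pos: "0 < level n Q"
  and clears_denoms_level: "clears_denoms n (level n Q) Q"
proof -
  obtain k where "0 < k" "clears_denoms n k Q" using clears_denoms_exists by blast
  then have "0 < level n Q \<and> clears_denoms n (level n Q) Q"
    unfolding level_eq_Least_clears_denoms by (intro LeastI) auto
  then show "0 < level n Q" "clears_denoms n (level n Q) Q" by auto
qed

text \<open>If \<open>l\<close> and \<open>k\<close> clear the denominators then so does \<open>k mod l = k - (k div l) l\<close>; minimality of the
  level forces it to vanish.\<close>
lemma level_dvd:
  assumes "clears_denoms n k Q"
  shows "level n Q dvd k"
proof -
  let ?l = "level n Q"
  have "clears_denoms n (k mod ?l) Q"
    unfolding clears_denoms_def
  proof (intro allI impI)
    fix i j assume ij: "i < n" "j < n"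
    have "(of_nat k :: rat) = of_nat (k div ?l) * of_nat ?l + of_nat (k mod ?l)"
      by (metis div_mult_mod_eq of_nat_add of_nat_mult)
    then have "of_nat (k mod ?l) * Q $$ (i,j)
        = of_nat k * Q $$ (i,j) - of_nat (k div ?l) * (of_nat ?l * Q $$ (i,j))"
      by (simp add: algebra_simps)
    also have "\<dots> \<in> \<int>"
      using assms clears_denoms_level[of n Q] ij unfolding clears_denoms_def
      by (intro Ints_diff Ints_mult[OF Ints_of_nat, of "k div ?l"]) auto
    finally show "of_nat (k mod ?l) * Q $$ (i,j) \<in> \<int>" .
  qed
  moreover have "k mod ?l < ?l" using level_pos[of n Q] by simp
  ultimately have "\<not> 0 < k mod ?l"
    using not_less_Least[of "k mod ?l" "\<lambda>k. 0 < k \<and> clears_denoms n k Q"]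
    unfolding level_eq_Least_clears_denoms by auto
  then show ?thesis by auto
qed

lemma clears_denoms_mult:
  assumes "A \<in> carrier_mat n n" "B \<in> carrier_mat n n" "clears_denoms n a A" "clears_denoms n b B"
  shows "clears_denoms n (a * b) (A * B)"
  unfolding clears_denoms_def
proof (intro allI impI)
  fix i j assume ij: "i < n" "j < n"
  have "of_nat (a * b) * (A * B) $$ (i,j) = (\<Sum>k<n. (of_nat a * A $$ (i,k)) * (of_nat b * B $$ (k,j)))"
    using assms ij by (simp add: scalar_prod_def sum_distrib_left atLeast0LessThan algebra_simps)
  also have "\<dots> \<in> \<int>"
    using assms(3,4) ij unfolding clears_denoms_def
    by (intro Ints_sum Ints_mult[of "of_nat a * _"]) auto
  finally show "of_nat (a * b) * (A * B) $$ (i,j) \<in> \<int>" .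
qed

lemma level_mult_dvd:
  assumes "A \<in> carrier_mat n n" "B \<in> carrier_mat n n"
  shows "level n (A * B) dvd level n A * level n B"
  using assms by (intro level_dvd clears_denoms_mult clears_denoms_level)

lemma level_transpose:
  assumes "A \<in> carrier_mat n n"
  shows "level n A\<^sup>T = level n A"
proof -
  have "clears_denoms n k A\<^sup>T = clears_denoms n k A" for k
    using assms unfolding clears_denoms_def by auto
  then show ?thesis unfolding level_eq_Least_clears_denoms by simp
qed

lemma level_mult3_dvd:
  assumes "A \<in> carrier_mat n n" "B \<in> carrier_mat n n" "C \<in> carrier_mat n n"
  shows "level n (A * B * C) dvd level n A * level n B * level n C"
  using assms by (intro level_dvd clears_denoms_mult clears_denoms_level) auto

lemma congruence_trans:
  fixes A P R :: "'a :: comm_ring_1 mat"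
  assumes "A \<in> carrier_mat n n" "P \<in> carrier_mat n n" "R \<in> carrier_mat n n"
    and "P\<^sup>T * A * P = B" "R\<^sup>T * B * R = C"
  shows "(P * R)\<^sup>T * A * (P * R) = C"
proof -
  have "(P * R)\<^sup>T * A * (P * R) = R\<^sup>T * (P\<^sup>T * A * P) * R"
    using assms(1-3) by (simp add: transpose_mult[of P n n R n] assoc_mult_mat[of _ n n _ n _ n])
  then show ?thesis using assms(4,5) by simp
qed

lemma congruence_uminus:
  fixes A P :: "'a :: comm_ring_1 mat"
  assumes "A \<in> carrier_mat n n" "P \<in> carrier_mat n n"
  shows "P\<^sup>T * (- A) * P = - (P\<^sup>T * A * P)"
  using assms by simp

lemma orthogonal_congruence_inverse:
  fixes A P :: "'a :: comm_ring_1 mat"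
  assumes "A \<in> carrier_mat n n" "P \<in> carrier_mat n n" "P * P\<^sup>T = 1\<^sub>m n"
    and "P\<^sup>T * A * P = B"
  shows "P * B * P\<^sup>T = A"
proof -
  have "P * (P\<^sup>T * A * P) * P\<^sup>T = (P * P\<^sup>T) * A * (P * P\<^sup>T)"
    using assms(1,2) by (simp add: assoc_mult_mat[of _ n n _ n _ n])
  then show ?thesis using assms by simp
qed

lemma orthogonal_conj_eq_mult_imp:
  fixes P X Y :: "'a :: comm_ring_1 mat"
  assumes "P \<in> carrier_mat n n" "X \<in> carrier_mat n n" "Y \<in> carrier_mat n n"
    and "P\<^sup>T * P = 1\<^sub>m n" "P * X * P\<^sup>T = P * Y"
  shows "X = Y * P"
proof -
  have "X = (P\<^sup>T * P) * X * (P\<^sup>T * P)" using assms(2,4) by simp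
  also have "\<dots> = P\<^sup>T * (P * X * P\<^sup>T) * P"
    using assms(1,2) by (simp add: assoc_mult_mat[of _ n n _ n _ n])
  also have "\<dots> = (P\<^sup>T * P) * Y * P"
    using assms(1,3,5) by (simp add: assoc_mult_mat[of _ n n _ n _ n])
  finally show ?thesis using assms(3,4) by simp
qed

lemma reg_rat_orth_mult_transpose:
  assumes "reg_rat_orth n Q"
  shows "Q * Q\<^sup>T = 1\<^sub>m n"
  using assms mat_mult_left_right_inverse[of "Q\<^sup>T" n Q] unfolding reg_rat_orth_def by auto

lemma reg_rat_orth_transpose:
  assumes "reg_rat_orth n Q"
  shows "reg_rat_orth n Q\<^sup>T"
proof -
  let ?e = "vec n (\<lambda>_. 1) :: rat vec"
  have Q: "Q \<in> carrier_mat n n" "Q\<^sup>T * Q = 1\<^sub>m n" "Q *\<^sub>v ?e = ?e"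
    using assms unfolding reg_rat_orth_def by auto
  have "Q\<^sup>T *\<^sub>v ?e = Q\<^sup>T *\<^sub>v (Q *\<^sub>v ?e)" using Q(3) by simp
  also have "\<dots> = (Q\<^sup>T * Q) *\<^sub>v ?e" using Q(1) by (simp add: assoc_mult_mat_vec[of _ n n _ n])
  finally have "Q\<^sup>T *\<^sub>v ?e = ?e" using Q(2) by simp
  then show ?thesis
    using Q reg_rat_orth_mult_transpose[OF assms] unfolding reg_rat_orth_def by auto
qed

lemma reg_rat_orth_mult:
  assumes "reg_rat_orth n Q" "reg_rat_orth n P"
  shows "reg_rat_orth n (Q * P)"
proof -
  let ?e = "vec n (\<lambda>_. 1) :: rat vec"
  have Q: "Q \<in> carrier_mat n n" "Q\<^sup>T * Q = 1\<^sub>m n" "Q *\<^sub>v ?e = ?e"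
    and P: "P \<in> carrier_mat n n" "P\<^sup>T * P = 1\<^sub>m n" "P *\<^sub>v ?e = ?e"
    using assms unfolding reg_rat_orth_def by auto
  have "(Q * P)\<^sup>T * (Q * P) = P\<^sup>T * (Q\<^sup>T * Q) * P"
    using Q(1) P(1) by (simp add: transpose_mult[of Q n n P n] assoc_mult_mat[of _ n n _ n _ n])
  moreover have "(Q * P) *\<^sub>v ?e = Q *\<^sub>v (P *\<^sub>v ?e)"
    using Q(1) P(1) by (simp add: assoc_mult_mat_vec[of _ n n _ n])
  ultimately show ?thesis using Q P unfolding reg_rat_orth_def by simp
qed

lemma ratm_uminus: "ratm (- S) = - ratm S"
  unfolding ratm_def by (intro eq_matI) auto

lemma ratm_carrier: "oriented_graph n S \<Longrightarrow> ratm S \<in> carrier_mat n n"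
  unfolding ratm_def oriented_graph_def by auto

lemma prime_product_eq_of_dvd:
  fixes p q d :: nat
  assumes "prime p" "prime q" "p \<noteq> q"
    and "d dvd p * q" "p * q dvd p * d * p" "p * q dvd q * d * q"
  shows "d = p * q"
proof -
  have not_dvd: "\<not> p dvd q" "\<not> q dvd p"
    using assms(1-3) primes_dvd_imp_eq by blast+
  have "q dvd p * d * p" using assms(5) by (metis dvd_mult_right mult.commute)
  then have q_dvd: "q dvd d" using assms(2) not_dvd by (simp add: prime_dvd_mult_iff)
  have "p dvd q * d * q" using assms(6) by (metis dvd_mult_left)
  then have p_dvd: "p dvd d" using assms(1) not_dvd by (simp add: prime_dvd_mult_iff)
  have "coprime p q" using assms(1-3) by (simp add: primes_coprime)
  then have "p * q dvd d" using p_dvd q_dvd by (simp add: divides_mult)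
  then show ?thesis using assms(4) by (simp add: dvd_antisym)
qed

theorem lemma5p3:
  fixes n p1 p2 :: nat and S D :: "int mat" and Q0 Q1 Q2 Qh :: "rat mat"
  assumes SG: "in_G n S"
    and Q0: "reg_rat_orth n Q0" "Q0\<^sup>T * ratm S * Q0 = ratm (- S)"
    and Q0_unique: "\<forall>Q. reg_rat_orth n Q \<and> Q\<^sup>T * ratm S * Q = ratm (- S) \<longrightarrow> Q = Q0"
    and lev0: "level n Q0 = p1 * p2"
    and primes: "prime p1" "prime p2" "odd p1" "odd p2" "p1 \<noteq> p2"
    and notW: "\<not> WDGSS n S"
    and D: "oriented_graph n D" "gen_cospectral n S D"
    and mates: "\<forall>T. oriented_graph n T \<and> gen_cospectral n S T \<longrightarrow>
                  iso_og n S T \<or> iso_og n (- S) T \<or> iso_og n D T \<or> iso_og n (- D) T"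
    and distinct: "\<not> iso_og n S (- S)" "\<not> iso_og n S D" "\<not> iso_og n S (- D)"
                  "\<not> iso_og n (- S) D" "\<not> iso_og n (- S) (- D)" "\<not> iso_og n D (- D)"
    and Q1: "Q1 \<in> Qset n S" "level n Q1 = p1" "Q1\<^sup>T * ratm S * Q1 = ratm D"
    and Q2: "reg_rat_orth n Q2" "level n Q2 = p2" "Q2\<^sup>T * ratm D * Q2 = ratm (- S)"
    and Qh: "reg_rat_orth n Qh" "Qh\<^sup>T * ratm (- D) * Qh = ratm D"
  shows "Qh = Q2 * Q1 \<and> level n Qh = p1 * p2"
proof -
  have orth: "reg_rat_orth n Q1" "reg_rat_orth n Q1\<^sup>T"
    using Q1(1) reg_rat_orth_transpose unfolding Qset_def by auto
  have carrier: "Q1 \<in> carrier_mat n n" "Q2 \<in> carrier_mat n n" "Qh \<in> carrier_mat n n"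
      "ratm S \<in> carrier_mat n n" "ratm D \<in> carrier_mat n n"
    using orth Q2(1) Qh(1) SG D(1) ratm_carrier unfolding reg_rat_orth_def in_G_def by auto
  have Qh_DD: "Qh\<^sup>T * ratm D * Qh = ratm (- D)"
    using Qh(2) congruence_uminus[OF carrier(5,3)] by (simp add: ratm_uminus) (metis uminus_uminus_mat)
  have Q1T_DS: "Q1\<^sup>T\<^sup>T * ratm (- D) * Q1\<^sup>T = ratm (- S)"
    using orthogonal_congruence_inverse[OF _ carrier(1) reg_rat_orth_mult_transpose[OF orth(1)]]
      congruence_uminus[OF carrier(4,1)] Q1(3) carrier(4) by (simp add: ratm_uminus)
  have "(Q1 * Qh * Q1\<^sup>T)\<^sup>T * ratm S * (Q1 * Qh * Q1\<^sup>T) = ratm (- S)"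
    using carrier by (intro congruence_trans[OF _ _ _ congruence_trans[OF _ _ _ Q1(3) Qh_DD] Q1T_DS]) auto
  then have Q0_conj: "Q1 * Qh * Q1\<^sup>T = Q0"
    using Q0_unique orth Qh(1) reg_rat_orth_mult by blast
  have "(Q1 * Q2)\<^sup>T * ratm S * (Q1 * Q2) = ratm (- S)"
    using carrier by (intro congruence_trans[OF _ _ _ Q1(3) Q2(3)])
  then have Q0_mult: "Q1 * Q2 = Q0"
    using Q0_unique orth Q2(1) reg_rat_orth_mult by blast
  have Qh_eq: "Qh = Q2 * Q1"
    using orth(1) Q0_conj Q0_mult unfolding reg_rat_orth_def
    by (intro orthogonal_conj_eq_mult_imp[OF carrier(1,3,2)]) auto
  have "Q2\<^sup>T * Qh * Q2 = (Q2\<^sup>T * Q2) * (Q1 * Q2)"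
    using Qh_eq carrier by (simp add: assoc_mult_mat[of _ n n _ n _ n])
  also have "\<dots> = Q0" using Q0_mult[symmetric] Q2(1) carrier unfolding reg_rat_orth_def by simp
  finally have "p1 * p2 dvd p2 * level n Qh * p2"
    using level_mult3_dvd[of "Q2\<^sup>T" n Qh Q2] carrier lev0 Q2(2) by (simp add: level_transpose)
  moreover have "p1 * p2 dvd p1 * level n Qh * p1"
    using level_mult3_dvd[of Q1 n Qh "Q1\<^sup>T"] carrier lev0 Q1(2) Q0_conj by (simp add: level_transpose)
  moreover have "level n Qh dvd p1 * p2"
    using level_mult_dvd[OF carrier(2,1)] Qh_eq Q1(2) Q2(2) by (simp add: mult.commute)
  ultimately show ?thesis
    using Qh_eq prime_product_eq_of_dvd primes by blast
qed

end
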